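(* Let $\Omega\subset\mathbb{R}^d$ ($d=2,3$) be a bounded domain, $H=L_2(\Omega)$ with inner product $(u,v)=\int_\Omega u v\,dx$ and norm $\|u\|=(u,u)^{1/2}$, and $\boldsymbol H=(L_2(\Omega))^d$. Let $\mu,\lambda,\alpha,k,\nu$ be constants and $S\ge 0$ a constant. Consider the operators $$\mathcal{A}\boldsymbol v=-\mu\nabla^2\boldsymbol v-(\lambda+\mu)\,\mathrm{grad}\,\mathrm{div}\,\boldsymbol v \ \text{ in } \boldsymbol H,\qquad \mathcal{B}p=-\mathrm{div}\Big(\frac{k}{\nu}\,\mathrm{grad}\,p\Big)\ \text{ in } H,$$ where $\mathcal{A}$ is self-adjoint and nonnegative in $\boldsymbol H$ and $\mathcal{B}$ is self-adjoint and positive in $H$, and let $\mathcal{G}$ (gradient) and $\mathcal{D}$ (divergence) satisfy $(\mathcal{G}p,\boldsymbol u)=-(\mathcal{D}\boldsymbol u,p)$ for all $p,\boldsymbol u$. Let $(\boldsymbol u(t),p(t))$ be a solution of $$\mathcal{A}\boldsymbol u+\alpha\mathcal{G}p=0,\qquad \frac{d}{dt}\big(S\,p+\alpha\mathcal{D}\boldsymbol u\big)+\mathcal{B}p=f(t),\quad t>0,$$ with $p(0)=p_0$. Then for all $t>0$, $$\|\boldsymbol u(t)\|_{\mathcal{A}}^2+S\|p(t)\|^2\le \|\boldsymbol u(0)\|_{\mathcal{A}}^2+S\|p(0)\|^2+\frac12\int_0^t\|f(s)\|^2_{\mathcal{B}^{-1}}\,ds.$$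
   Context: This is the operator form of the linear poroelasticity (Biot) system: $\boldsymbol u$ is the displacement, $p$ the fluid pressure, $S=1/M$ with $M$ the Biot modulus, $k$ the permeability, $\nu$ the fluid viscosity, $\alpha$ the Biot–Willis coupling coefficient, $f$ a source term. The operators act on functions satisfying the homogeneous boundary conditions of the problem. Norms: $\|\boldsymbol u\|_{\mathcal{A}}=(\mathcal{A}\boldsymbol u,\boldsymbol u)^{1/2}$, $\|f\|_{\mathcal{B}^{-1}}=(\mathcal{B}^{-1}f,f)^{1/2}$. *)

theory Defs
  imports "HOL-Analysis.Analysis"
begin

definition linear_op_on :: "'a::real_vector set \<Rightarrow> ('a \<Rightarrow> 'b::real_vector) \<Rightarrow> bool" where
  "linear_op_on X T \<longleftrightarrow> subspace X \<and>
     (\<forall>x\<in>X. \<forall>y\<in>X. T (x + y) = T x + T y) \<and>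
     (\<forall>c. \<forall>x\<in>X. T (c *\<^sub>R x) = c *\<^sub>R T x)"

text \<open>Self-adjoint: densely defined, linear, and equal to its Hilbert adjoint
  (the adjoint's domain is {y. exists z. for all x in X, (T x, y) = (x, z)}).\<close>

definition selfadjoint_on :: "'a::real_inner set \<Rightarrow> ('a \<Rightarrow> 'a) \<Rightarrow> bool" where
  "selfadjoint_on X T \<longleftrightarrow> linear_op_on X T \<and> closure X = UNIV \<and>
     (\<forall>x\<in>X. \<forall>y\<in>X. inner (T x) y = inner x (T y)) \<and>
     (\<forall>y z. (\<forall>x\<in>X. inner (T x) y = inner x z) \<longrightarrow> y \<in> X \<and> T y = z)"

definition nonneg_on :: "'a::real_inner set \<Rightarrow> ('a \<Rightarrow> 'a) \<Rightarrow> bool" where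
  "nonneg_on X T \<longleftrightarrow> (\<forall>x\<in>X. inner (T x) x \<ge> 0)"

definition positive_on :: "'a::real_inner set \<Rightarrow> ('a \<Rightarrow> 'a) \<Rightarrow> bool" where
  "positive_on X T \<longleftrightarrow> (\<forall>x\<in>X. x \<noteq> 0 \<longrightarrow> inner (T x) x > 0)"

definition op_norm :: "('a::real_inner \<Rightarrow> 'a) \<Rightarrow> 'a \<Rightarrow> real" where
  "op_norm T u = sqrt (inner (T u) u)"

definition op_inv :: "'a set \<Rightarrow> ('a \<Rightarrow> 'b) \<Rightarrow> 'b \<Rightarrow> 'a" where
  "op_inv X T f = (THE x. x \<in> X \<and> T x = f)"

definition inv_norm :: "'a::real_inner set \<Rightarrow> ('a \<Rightarrow> 'a) \<Rightarrow> 'a \<Rightarrow> real" where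
  "inv_norm X T f = sqrt (inner (op_inv X T f) f)"

end

theory Submission
  imports Defs
begin

text \<open>The energy \<open>E(t) = \<parallel>u(t)\<parallel>\<^sub>A\<^sup>2 + S \<parallel>p(t)\<parallel>\<^sup>2\<close> satisfies \<open>E' = 2 (f - \<B>p, p)\<close>: by
  symmetry of \<open>\<A>\<close>, the first equation and \<open>(\<G>p, w) = -(\<D>w, p)\<close>, the term \<open>2 (\<A>u, u')\<close>
  equals \<open>2\<alpha> (\<D>u', p)\<close>, which combines with \<open>2S (p', p)\<close> into the time derivative of
  \<open>S p + \<alpha>\<D>u\<close> paired with \<open>p\<close>. Writing \<open>f = \<B>x\<close>, nonnegativity of
  \<open>(\<B>(x - 2p), x - 2p)\<close> gives \<open>2 (f - \<B>p, p) \<le> (x, f) / 2 = \<parallel>f\<parallel>\<^sup>2\<^sub>\<B>\<^sub>-\<^sub>1 / 2\<close>, and integrating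
  over \<open>[0, t]\<close> yields the estimate.\<close>

lemma selfadjoint_on_linear: "selfadjoint_on X T \<Longrightarrow> linear_op_on X T"
  unfolding selfadjoint_on_def by blast

lemma selfadjoint_on_symmetric:
  "selfadjoint_on X T \<Longrightarrow> x \<in> X \<Longrightarrow> y \<in> X \<Longrightarrow> inner (T x) y = inner x (T y)"
  unfolding selfadjoint_on_def by blast

lemma positive_on_nonneg: "positive_on X T \<Longrightarrow> x \<in> X \<Longrightarrow> 0 \<le> inner (T x) x"
  unfolding positive_on_def by (cases "x = 0") (auto intro: less_imp_le)

lemma linear_op_on_diff:
  assumes "linear_op_on X T" "x \<in> X" "y \<in> X"
  shows "T (x - y) = T x - T y"
proof -
  have sub: "subspace X" and add: "\<forall>x\<in>X. \<forall>y\<in>X. T (x + y) = T x + T y"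
    and scale: "\<forall>c. \<forall>x\<in>X. T (c *\<^sub>R x) = c *\<^sub>R T x"
    using assms(1) unfolding linear_op_on_def by blast+
  have "- y \<in> X" using sub assms(3) by (rule subspace_neg)
  then have "T (x + - y) = T x + T (- y)" using add assms(2) by blast
  moreover have "T (- y) = - T y" using scale assms(3) by (metis scaleR_minus1_left)
  ultimately show ?thesis by simp
qed

lemma positive_on_imp_inj_on:
  assumes "linear_op_on X T" "positive_on X T"
  shows "inj_on T X"
proof (rule inj_onI, rule ccontr)
  fix x y assume x: "x \<in> X" and y: "y \<in> X" and "T x = T y" "x \<noteq> y"
  moreover have "x - y \<in> X"
    using assms(1) x y unfolding linear_op_on_def by (simp add: subspace_diff)
  ultimately have "0 < inner (T (x - y)) (x - y)"
    using assms(2) unfolding positive_on_def by simp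
  then show False
    using linear_op_on_diff[OF assms(1) x y] \<open>T x = T y\<close> by simp
qed

lemma op_inv_apply:
  assumes "inj_on T X" "x \<in> X"
  shows "op_inv X T (T x) = x"
  unfolding op_inv_def using assms by (auto dest: inj_onD)

lemma inv_norm_apply:
  assumes "linear_op_on X T" "positive_on X T" "x \<in> X"
  shows "(inv_norm X T (T x))\<^sup>2 = inner (T x) x"
  using positive_on_nonneg[OF assms(2,3)] unfolding inv_norm_def
  by (simp add: op_inv_apply[OF positive_on_imp_inj_on[OF assms(1,2)] assms(3)] inner_commute)

lemma inner_diff_le_inv_norm:
  assumes sa: "selfadjoint_on X B" and pos: "positive_on X B" and x: "x \<in> X" and q: "q \<in> X"
  shows "4 * inner (B x - B q) q \<le> (inv_norm X B (B x))\<^sup>2"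
proof -
  have lin: "linear_op_on X B" by (rule selfadjoint_on_linear[OF sa])
  have sub: "subspace X" using lin unfolding linear_op_on_def by blast
  have "2 *\<^sub>R q \<in> X" "x - 2 *\<^sub>R q \<in> X"
    using sub x q by (auto intro: subspace_scale subspace_diff)
  moreover have "B (2 *\<^sub>R q) = 2 *\<^sub>R B q"
    using lin q unfolding linear_op_on_def by blast
  ultimately have B_diff: "B (x - 2 *\<^sub>R q) = B x - 2 *\<^sub>R B q"
    using linear_op_on_diff[OF lin x] by simp
  have sym: "inner (B q) x = inner (B x) q"
    using selfadjoint_on_symmetric[OF sa q x] by (simp add: inner_commute)
  have "0 \<le> inner (B (x - 2 *\<^sub>R q)) (x - 2 *\<^sub>R q)"
    using pos \<open>x - 2 *\<^sub>R q \<in> X\<close> by (rule positive_on_nonneg)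
  also have "\<dots> = inner (B x) x - 4 * inner (B x) q + 4 * inner (B q) q"
    unfolding B_diff by (simp add: inner_diff_left inner_diff_right sym)
  finally have "0 \<le> inner (B x) x - 4 * inner (B x) q + 4 * inner (B q) q" .
  then show ?thesis
    using inv_norm_apply[OF lin pos x] by (simp add: inner_diff_left)
qed

lemma has_vector_derivative_energy:
  fixes u a :: "real \<Rightarrow> 'a::real_inner" and p :: "real \<Rightarrow> 'b::real_inner"
  assumes "(u has_vector_derivative u') (at s)" "(a has_vector_derivative a') (at s)"
    and "(p has_vector_derivative p') (at s)"
  shows "((\<lambda>r. inner (a r) (u r) + S * inner (p r) (p r)) has_vector_derivative
           inner (a s) u' + inner a' (u s) + 2 * S * inner p' (p s)) (at s)"
proof -
  have "((\<lambda>r. inner (a r) (u r)) has_vector_derivative inner (a s) u' + inner a' (u s)) (at s)"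
    by (rule bounded_bilinear.has_vector_derivative[OF bounded_bilinear_inner assms(2,1)])
  moreover have "((\<lambda>r. S * inner (p r) (p r)) has_vector_derivative
                   S * (inner (p s) p' + inner p' (p s))) (at s)"
    using bounded_linear.has_vector_derivative[OF bounded_linear_mult_right,
        OF bounded_bilinear.has_vector_derivative[OF bounded_bilinear_inner assms(3,3)]] .
  ultimately show ?thesis
    by (auto dest: has_vector_derivative_add simp: inner_commute algebra_simps)
qed

lemma coupling_term_eq:
  assumes "a + \<alpha> *\<^sub>R G p = 0" "inner (G p) u' = - inner (D u') p"
    and "S *\<^sub>R p' + \<alpha> *\<^sub>R D u' = g"
  shows "inner a u' + S * inner p' p = inner g p"
proof -
  have "inner a u' = \<alpha> * inner (D u') p"
    using assms(1,2) by (simp add: eq_neg_iff_add_eq_0[symmetric])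
  then show ?thesis
    using arg_cong[OF assms(3), of "\<lambda>v. inner v p"] by (simp add: inner_add_left)
qed

lemma has_vector_derivative_biot_energy:
  assumes A_sa: "selfadjoint_on domA A" and u_dom: "u s \<in> domA" "u' \<in> domA"
    and GD_adj: "inner (G (p s)) u' = - inner (D u') (p s)"
    and u_deriv: "(u has_vector_derivative u') (at s)"
    and Au_deriv: "((\<lambda>r. A (u r)) has_vector_derivative A u') (at s)"
    and Du_deriv: "((\<lambda>r. D (u r)) has_vector_derivative D u') (at s)"
    and p_deriv: "(p has_vector_derivative p') (at s)"
    and eq1: "A (u s) + \<alpha> *\<^sub>R G (p s) = 0"
    and eq2: "((\<lambda>r. S *\<^sub>R p r + \<alpha> *\<^sub>R D (u r)) has_vector_derivative g) (at s)"
  shows "((\<lambda>r. inner (A (u r)) (u r) + S * inner (p r) (p r)) has_vector_derivative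
           2 * inner g (p s)) (at s)"
proof -
  have "((\<lambda>r. S *\<^sub>R p r + \<alpha> *\<^sub>R D (u r)) has_vector_derivative S *\<^sub>R p' + \<alpha> *\<^sub>R D u') (at s)"
    using p_deriv Du_deriv
    by (intro has_vector_derivative_add bounded_linear.has_vector_derivative[OF bounded_linear_scaleR_right])
  then have "S *\<^sub>R p' + \<alpha> *\<^sub>R D u' = g"
    using eq2 by (rule vector_derivative_unique_at)
  then have coupling: "inner (A (u s)) u' + S * inner p' (p s) = inner g (p s)"
    using eq1 GD_adj by (intro coupling_term_eq)
  have "inner (A u') (u s) = inner (A (u s)) u'"
    using selfadjoint_on_symmetric[OF A_sa u_dom(2,1)] by (simp add: inner_commute)
  with coupling have "inner (A (u s)) u' + inner (A u') (u s) + 2 * S * inner p' (p s) = 2 * inner g (p s)"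
    by (simp add: algebra_simps)
  with has_vector_derivative_energy[OF u_deriv Au_deriv p_deriv, of S] show ?thesis
    by simp
qed

theorem theorem1:
  fixes domA :: "'v::{real_inner,complete_space} set" and A :: "'v \<Rightarrow> 'v"
    and domB :: "'h::{real_inner,complete_space} set" and B :: "'h \<Rightarrow> 'h"
    and domG :: "'h set" and G :: "'h \<Rightarrow> 'v"
    and domD :: "'v set" and D :: "'v \<Rightarrow> 'h"
    and S \<alpha> :: real
    and u u' :: "real \<Rightarrow> 'v" and p p' f :: "real \<Rightarrow> 'h" and p0 :: 'h and t :: real
  assumes A_sa: "selfadjoint_on domA A" and A_nonneg: "nonneg_on domA A"
    and B_sa: "selfadjoint_on domB B" and B_pos: "positive_on domB B"
    and B_onto: "\<forall>g. \<exists>x\<in>domB. B x = g"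
    and G_lin: "linear_op_on domG G" and D_lin: "linear_op_on domD D"
    and GD_adj: "\<forall>q\<in>domG. \<forall>w\<in>domD. inner (G q) w = - inner (D w) q"
    and S_nonneg: "S \<ge> 0"
    \<comment> \<open>the solution takes values in the operator domains\<close>
    and u_dom: "\<forall>s\<ge>0. u s \<in> domA \<inter> domD"
    and p_dom: "\<forall>s\<ge>0. p s \<in> domB \<inter> domG"
    \<comment> \<open>regularity of the solution\<close>
    and u_cont: "continuous_on {0..} u" and Au_cont: "continuous_on {0..} (\<lambda>s. A (u s))"
    and p_cont: "continuous_on {0..} p"
    and u'_dom: "\<forall>s>0. u' s \<in> domA \<inter> domD"
    and u_deriv: "\<forall>s>0. (u has_vector_derivative u' s) (at s)"
    and Au_deriv: "\<forall>s>0. ((\<lambda>r. A (u r)) has_vector_derivative A (u' s)) (at s)"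
    and Du_deriv: "\<forall>s>0. ((\<lambda>r. D (u r)) has_vector_derivative D (u' s)) (at s)"
    and p_deriv: "\<forall>s>0. (p has_vector_derivative p' s) (at s)"
    \<comment> \<open>the system\<close>
    and eq1: "\<forall>s>0. A (u s) + \<alpha> *\<^sub>R G (p s) = 0"
    and eq2: "\<forall>s>0. ((\<lambda>r. S *\<^sub>R p r + \<alpha> *\<^sub>R D (u r)) has_vector_derivative (f s - B (p s))) (at s)"
    and init: "p 0 = p0"
    and f_int: "(\<lambda>s. (inv_norm domB B (f s))\<^sup>2) integrable_on {0..t}"
    and t_pos: "t > 0"
  shows "(op_norm A (u t))\<^sup>2 + S * (norm (p t))\<^sup>2
           \<le> (op_norm A (u 0))\<^sup>2 + S * (norm (p 0))\<^sup>2
              + 1/2 * integral {0..t} (\<lambda>s. (inv_norm domB B (f s))\<^sup>2)"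
proof -
  define E where "E s = inner (A (u s)) (u s) + S * inner (p s) (p s)" for s
  define E' where "E' s = 2 * inner (f s - B (p s)) (p s)" for s
  have E_deriv: "(E has_vector_derivative E' s) (at s)" if "s \<in> {0<..<t}" for s
    unfolding E_def E'_def
    using that u_dom u'_dom p_dom GD_adj eq1 eq2 u_deriv Au_deriv Du_deriv p_deriv
    by (intro has_vector_derivative_biot_energy[OF A_sa,
          where u' = "u' s" and p' = "p' s" and g = "f s - B (p s)"]) auto
  have E'_le: "E' s \<le> 1/2 * (inv_norm domB B (f s))\<^sup>2" if "s \<in> {0..t}" for s
  proof -
    obtain x where "x \<in> domB" "B x = f s" using B_onto by blast
    then show ?thesis
      using inner_diff_le_inv_norm[OF B_sa B_pos, of x "p s"] p_dom that unfolding E'_def by auto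
  qed
  have "continuous_on {0..t} E"
    unfolding E_def using u_cont Au_cont p_cont
    by (intro continuous_intros) (auto elim: continuous_on_subset)
  then have "(E' has_integral E t - E 0) {0..t}"
    using t_pos E_deriv by (intro fundamental_theorem_of_calculus_interior) auto
  moreover have "((\<lambda>s. 1/2 * (inv_norm domB B (f s))\<^sup>2) has_integral
                   1/2 * integral {0..t} (\<lambda>s. (inv_norm domB B (f s))\<^sup>2)) {0..t}"
    by (rule has_integral_mult_right[OF integrable_integral[OF f_int]])
  ultimately have "E t - E 0 \<le> 1/2 * integral {0..t} (\<lambda>s. (inv_norm domB B (f s))\<^sup>2)"
    using E'_le by (rule has_integral_le)
  moreover have "(op_norm A (u r))\<^sup>2 = inner (A (u r)) (u r)" if "r \<ge> 0" for r
    using A_nonneg u_dom that unfolding op_norm_def nonneg_on_def by auto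
  ultimately show ?thesis
    unfolding E_def using t_pos by (simp add: power2_norm_eq_inner)
qed

end
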